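(* Let $\mathsf{K}$ be a commutative idempotent semiring, $N\ge1$, $\mathsf{A}\in\mathsf{K}^{N\times N}$, $\mathsf{b}\in\mathsf{K}^{N\times1}$, $\mathsf{c}\in\mathsf{K}^{1\times N}$, and $\mathsf{S}_N=\mathsf{c}(\mathsf{A}X)^*\mathsf{b}\in\mathsf{K}[[X]]$. Then $$\mathsf{S}_N=\bigoplus_{\pi\in\mathscr{P}_N}w(\pi)\Big(\bigoplus_{C\in\mathscr{A}(\pi)}\ \bigotimes_{\gamma\in C}w(\gamma)^+\Big),$$ where the term corresponding to $C=\emptyset$ is $\mathbb{1}$ (and $\emptyset\in\mathscr{A}(\pi)$ for every $\pi$).
   Context: $(\mathsf{A}X)^*=\bigoplus_{k\ge0}\mathsf{A}^kX^k$, so $\mathsf{S}_N=\bigoplus_k \mathsf{c}\mathsf{A}^k\mathsf{b}\,X^k$. For a series $U$ with zero constant coefficient, $U^*=\bigoplus_{k\ge0}U^k$ and $U^+=UU^*$. The digraph $G_N$ has nodes $1,\dots,N$, an input node $in$ and an output node $out$; arcs $j\to i$ with weight $\mathsf{A}_{ij}X$ for $1\le i,j\le N$, arcs $in\to i$ with weight $\mathsf{b}_i$, and arcs $i\to out$ with weight $\mathsf{c}_i$. The weight $w(\pi)$ of a path is the product of the weights of its arcs. A path is elementary if it has no repeated node; an elementary circuit is a closed path with no repeated node other than its common start and end. Two circuits are cyclic conjugates if one is obtained from the other by a circular permutation; by commutativity conjugates have equal weight, so $w(\gamma)$ is defined for a conjugacy class $\gamma$. $\mathscr{C}_N$ is the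 set of conjugacy classes of elementary circuits of $G_N$; $\mathscr{P}_N$ is the set of elementary paths from $in$ to $out$. For a path $\pi$, a set $C\subseteq\mathscr{C}_N$ is accessible from $\pi$ if the union of the circuits of $C$ and of the path $\pi$ is a connected subgraph in the undirected sense; $\mathscr{A}(\pi)$ is the set of subsets $C\subseteq\mathscr{C}_N$ accessible from $\pi$. *)

theory Defs
  imports "HOL-Computational_Algebra.Formal_Power_Series"
begin

class idem_comm_semiring_1 = comm_semiring_1 +
  assumes add_idem: "x + x = x"

text \<open>Kleene star and plus of a power series (meant for zero constant coefficient):
  U* = sum over k of U^k, computed coefficientwise (coefficient n only gets
  contributions from k <= n when U has zero constant term).\<close>
definition fps_kstar :: "'a::comm_semiring_1 fps \<Rightarrow> 'a fps" where
  "fps_kstar U = Abs_fps (\<lambda>n. \<Sum>k\<le>n. fps_nth (U ^ k) n)"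

definition fps_kplus :: "'a::comm_semiring_1 fps \<Rightarrow> 'a fps" where
  "fps_kplus U = U * fps_kstar U"

text \<open>Matrices indexed by 1..N, as functions.\<close>
fun matpow :: "nat \<Rightarrow> (nat \<Rightarrow> nat \<Rightarrow> 'a::comm_semiring_1) \<Rightarrow> nat \<Rightarrow> nat \<Rightarrow> nat \<Rightarrow> 'a" where
  "matpow N A 0 = (\<lambda>i j. if i = j then 1 else 0)"
| "matpow N A (Suc k) = (\<lambda>i j. \<Sum>l\<in>{1..N}. A i l * matpow N A k l j)"

text \<open>S_N = c (A X)^* b = sum_k (c A^k b) X^k.\<close>
definition S_series :: "nat \<Rightarrow> (nat \<Rightarrow> nat \<Rightarrow> 'a::comm_semiring_1) \<Rightarrow> (nat \<Rightarrow> 'a) \<Rightarrow> (nat \<Rightarrow> 'a) \<Rightarrow> 'a fps" where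
  "S_series N A b c = Abs_fps (\<lambda>k. \<Sum>i\<in>{1..N}. \<Sum>j\<in>{1..N}. c i * matpow N A k i j * b j)"

datatype node = In | Out | Nd nat

fun is_arc :: "nat \<Rightarrow> node \<times> node \<Rightarrow> bool" where
  "is_arc N (In, Nd i) = (i \<in> {1..N})"
| "is_arc N (Nd j, Nd i) = (i \<in> {1..N} \<and> j \<in> {1..N})"
| "is_arc N (Nd i, Out) = (i \<in> {1..N})"
| "is_arc N _ = False"

fun arc_weight :: "(nat \<Rightarrow> nat \<Rightarrow> 'a::comm_semiring_1) \<Rightarrow> (nat \<Rightarrow> 'a) \<Rightarrow> (nat \<Rightarrow> 'a) \<Rightarrow> node \<times> node \<Rightarrow> 'a fps" where
  "arc_weight A b c (In, Nd i) = fps_const (b i)"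
| "arc_weight A b c (Nd j, Nd i) = fps_const (A i j) * fps_X"
| "arc_weight A b c (Nd i, Out) = fps_const (c i)"
| "arc_weight A b c _ = 0"

definition path_arcs :: "node list \<Rightarrow> (node \<times> node) list" where
  "path_arcs xs = zip xs (tl xs)"

definition circ_arcs :: "node list \<Rightarrow> (node \<times> node) list" where
  "circ_arcs xs = zip xs (rotate1 xs)"

definition weight :: "(nat \<Rightarrow> nat \<Rightarrow> 'a::comm_semiring_1) \<Rightarrow> (nat \<Rightarrow> 'a) \<Rightarrow> (nat \<Rightarrow> 'a) \<Rightarrow> (node \<times> node) list \<Rightarrow> 'a fps" where
  "weight A b c es = prod_list (map (arc_weight A b c) es)"

definition elem_paths :: "nat \<Rightarrow> node list set" where
  "elem_paths N = {xs. xs \<noteq> [] \<and> hd xs = In \<and> last xs = Out \<and> distinct xs \<and>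
                       (\<forall>e\<in>set (path_arcs xs). is_arc N e)}"

definition elem_circuit :: "nat \<Rightarrow> node list \<Rightarrow> bool" where
  "elem_circuit N xs \<longleftrightarrow> xs \<noteq> [] \<and> distinct xs \<and> (\<forall>e\<in>set (circ_arcs xs). is_arc N e)"

definition circ_class :: "node list \<Rightarrow> node list set" where
  "circ_class xs = range (\<lambda>k. rotate k xs)"

definition elem_circuit_classes :: "nat \<Rightarrow> node list set set" where
  "elem_circuit_classes N = circ_class ` {xs. elem_circuit N xs}"

definition class_weight :: "(nat \<Rightarrow> nat \<Rightarrow> 'a::comm_semiring_1) \<Rightarrow> (nat \<Rightarrow> 'a) \<Rightarrow> (nat \<Rightarrow> 'a) \<Rightarrow> node list set \<Rightarrow> 'a fps" where
  "class_weight A b c \<gamma> = weight A b c (circ_arcs (SOME xs. xs \<in> \<gamma>))"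

definition accessible :: "node list \<Rightarrow> node list set set \<Rightarrow> bool" where
  "accessible p C \<longleftrightarrow>
     (let V = set p \<union> (\<Union>\<gamma>\<in>C. \<Union>xs\<in>\<gamma>. set xs);
          E = set (path_arcs p) \<union> (\<Union>\<gamma>\<in>C. \<Union>xs\<in>\<gamma>. set (circ_arcs xs))
      in \<forall>u\<in>V. \<forall>v\<in>V. (u, v) \<in> (E \<union> E\<inverse>)\<^sup>*)"

definition accessible_sets :: "nat \<Rightarrow> node list \<Rightarrow> node list set set set" where
  "accessible_sets N p = {C. C \<subseteq> elem_circuit_classes N \<and> accessible p C}"

end

theory Submission
  imports Defs "HOL-Library.FuncSet"
begin

text \<open>
  \<^item> Coefficient \<open>n\<close> of \<open>S\<^sub>N\<close> is the sum of the values of all walks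
    \<open>in \<rightarrow> y\<^sub>1 \<rightarrow> \<dots> \<rightarrow> y\<^sub>n\<^sub>+\<^sub>1 \<rightarrow> out\<close> (expansion of the matrix powers).
  \<^item> Coefficient \<open>n\<close> of the right-hand side is the sum of the coefficients of the weights
    \<open>w(p) \<Prod>\<^sub>\<gamma> w(\<gamma>)\<^bsup>g \<gamma>\<^esup>\<close> of all decorated paths \<open>(p, C, g)\<close>: an elementary path, an
    accessible set of circuit classes and multiplicities \<open>g \<gamma> \<ge> 1\<close> (expansion of the
    Kleene pluses, truncated to the relevant powers).
  \<^item> Every walk decomposes into an elementary path and elementary circuits, which gives a
    decorated path of the same weight; conversely the circuits of a decorated path can be
    glued, one accessible class after the other, onto its path to form a walk.
  \<^item> In an idempotent semiring a finite sum only depends on the set of its nonzero terms,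
    so the two coefficient sums agree.
\<close>

section \<open>Finite sums in an idempotent semiring\<close>

text \<open>With idempotent addition, a finite sum is the least upper bound of its terms for the
  order \<open>x \<le> y \<longleftrightarrow> x + y = y\<close>.\<close>

lemma idem_sum_absorb:
  fixes f :: "'b \<Rightarrow> 'a::idem_comm_semiring_1"
  assumes "finite S" "x \<in> S"
  shows "f x + sum f S = sum f S"
proof -
  have "sum f S = f x + sum f (S - {x})"
    using assms by (simp add: sum.remove)
  then show ?thesis
    by (metis add.assoc add_idem)
qed

lemma idem_sum_bounded:
  fixes f :: "'b \<Rightarrow> 'a::idem_comm_semiring_1"
  assumes "finite S" "\<And>x. x \<in> S \<Longrightarrow> f x + s = s"
  shows "sum f S + s = s"
  using assms by (induction S rule: finite_induct) (simp_all add: add.assoc)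

lemma idem_sum_eqI:
  fixes f :: "'b \<Rightarrow> 'a::idem_comm_semiring_1" and g :: "'c \<Rightarrow> 'a"
  assumes fin: "finite S" "finite T"
    and f_in_g: "\<And>x. x \<in> S \<Longrightarrow> \<exists>y\<in>T. f x = g y"
    and g_in_f: "\<And>y. y \<in> T \<Longrightarrow> g y = 0 \<or> (\<exists>x\<in>S. g y = f x)"
  shows "sum f S = sum g T"
proof -
  have "sum f S + sum g T = sum g T"
    using fin f_in_g by (intro idem_sum_bounded) (metis idem_sum_absorb)+
  moreover have "sum g T + sum f S = sum f S"
    using fin g_in_f by (intro idem_sum_bounded) (metis add_0 idem_sum_absorb)+
  ultimately show ?thesis
    by (metis add.commute)
qed

lemma path_arcs_simps [simp]:
  "path_arcs [] = []" "path_arcs [x] = []"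
  "path_arcs (x # y # zs) = (x, y) # path_arcs (y # zs)"
  by (simp_all add: path_arcs_def)

lemma path_arcs_append:
  "path_arcs (xs @ y # ys) = path_arcs (xs @ [y]) @ path_arcs (y # ys)"
proof (induction xs)
  case (Cons x xs)
  then show ?case by (cases xs) auto
qed simp

lemma path_arcs_snoc:
  "xs \<noteq> [] \<Longrightarrow> path_arcs (xs @ [y]) = path_arcs xs @ [(last xs, y)]"
proof (induction xs)
  case (Cons x xs)
  then show ?case by (cases xs) auto
qed simp

lemma length_path_arcs: "length (path_arcs xs) = length xs - 1"
  by (simp add: path_arcs_def)

lemma length_circ_arcs: "length (circ_arcs xs) = length xs"
  by (simp add: circ_arcs_def)

lemma circ_arcs_path: "circ_arcs (x # xs) = path_arcs (x # xs @ [x])"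
proof -
  have "zip ((x # xs) @ [x]) (xs @ [x]) = zip (x # xs) (xs @ [x])"
    by (simp only: zip_append1) simp
  then show ?thesis
    by (simp add: circ_arcs_def path_arcs_def)
qed

lemma path_arcs_split_circuit:
  "path_arcs (us @ v # ws @ v # zs) =
     path_arcs (us @ [v]) @ circ_arcs (v # ws) @ path_arcs (v # zs)"
proof -
  have "path_arcs (us @ v # ws @ v # zs) = path_arcs (us @ [v]) @ path_arcs ((v # ws) @ v # zs)"
    using path_arcs_append[of us v "ws @ v # zs"] by simp
  also have "path_arcs ((v # ws) @ v # zs) = path_arcs ((v # ws) @ [v]) @ path_arcs (v # zs)"
    by (rule path_arcs_append)
  finally show ?thesis
    by (simp add: circ_arcs_path)
qed

lemma path_arcs_in_set: "e \<in> set (path_arcs xs) \<Longrightarrow> fst e \<in> set xs \<and> snd e \<in> set xs"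
  unfolding path_arcs_def
  by (cases xs; cases e) (auto dest: set_zip_leftD set_zip_rightD)

lemma circ_arcs_in_set: "e \<in> set (circ_arcs xs) \<Longrightarrow> fst e \<in> set xs \<and> snd e \<in> set xs"
  unfolding circ_arcs_def
  by (cases e) (auto dest: set_zip_leftD set_zip_rightD)

text \<open>Rotating a circuit does not change its multiset of arcs; this is why the weight of a
  conjugacy class is well defined.\<close>
lemma mset_circ_arcs_rotate1: "mset (circ_arcs (rotate1 xs)) = mset (circ_arcs xs)"
proof (cases xs)
  case (Cons x ys)
  show ?thesis
  proof (cases ys)
    case (Cons y zs)
    have "circ_arcs (rotate1 xs) = path_arcs ((y # zs) @ [x]) @ [(x, y)]"
      using \<open>xs = x # ys\<close> Cons path_arcs_snoc[of "(y # zs) @ [x]" y]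
      by (simp add: circ_arcs_path)
    moreover have "circ_arcs xs = (x, y) # path_arcs ((y # zs) @ [x])"
      using \<open>xs = x # ys\<close> Cons by (simp add: circ_arcs_path)
    ultimately show ?thesis
      by simp
  qed (use Cons in simp)
qed simp

lemma mset_circ_arcs_rotate: "mset (circ_arcs (rotate k xs)) = mset (circ_arcs xs)"
  by (induction k) (simp_all add: mset_circ_arcs_rotate1)

lemma reach_from_hd: "u \<in> set xs \<Longrightarrow> (hd xs, u) \<in> (set (path_arcs xs))\<^sup>*"
proof (induction xs)
  case (Cons x xs)
  show ?case
  proof (cases "u = x")
    case False
    then obtain y zs where xs: "xs = y # zs" and u: "u \<in> set xs"
      using Cons.prems by (cases xs) auto
    have "(y, u) \<in> (set (path_arcs (x # xs)))\<^sup>*"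
      using Cons.IH u xs rtrancl_mono[of "set (path_arcs xs)" "set (path_arcs (x # xs))"] by auto
    moreover have "(x, y) \<in> set (path_arcs (x # xs))"
      using xs by simp
    ultimately show ?thesis
      by (simp add: converse_rtrancl_into_rtrancl)
  qed simp
qed simp

lemma walk_connected:
  assumes "u \<in> set xs" "v \<in> set xs"
  shows "(u, v) \<in> (set (path_arcs xs) \<union> (set (path_arcs xs))\<inverse>)\<^sup>*"
proof -
  let ?E = "set (path_arcs xs)"
  have "(u, hd xs) \<in> (?E \<union> ?E\<inverse>)\<^sup>*"
    using rtrancl_converseI[OF reach_from_hd[OF assms(1)]] rtrancl_mono[of "?E\<inverse>" "?E \<union> ?E\<inverse>"]
    by auto
  moreover have "(hd xs, v) \<in> (?E \<union> ?E\<inverse>)\<^sup>*"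
    using reach_from_hd[OF assms(2)] rtrancl_mono[of ?E "?E \<union> ?E\<inverse>"] by auto
  ultimately show ?thesis
    by (rule rtrancl_trans)
qed

lemma rtrancl_leaves_set:
  assumes "(a, u) \<in> R\<^sup>*" "a \<in> X" "u \<notin> X"
  shows "\<exists>x y. (x, y) \<in> R \<and> x \<in> X \<and> y \<notin> X"
  using assms by (induction rule: rtrancl_induct) auto

section \<open>Walks from \<open>in\<close> to \<open>out\<close>\<close>

definition walk :: "nat \<Rightarrow> node list \<Rightarrow> bool" where
  "walk N xs \<longleftrightarrow> xs \<noteq> [] \<and> hd xs = In \<and> last xs = Out \<and> (\<forall>e\<in>set (path_arcs xs). is_arc N e)"

lemma split_nondistinct:
  "\<not> distinct xs \<Longrightarrow> \<exists>us v ws zs. xs = us @ v # ws @ v # zs \<and> distinct (v # ws)"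
proof (induction xs)
  case (Cons x xs)
  show ?case
  proof (cases "distinct xs")
    case True
    with Cons.prems obtain ws zs where xs: "xs = ws @ x # zs" "x \<notin> set ws"
      using split_list_first[of x xs] by auto
    with True have "distinct (x # ws)"
      by simp
    with xs show ?thesis
      by (metis append_Nil)
  next
    case False
    then show ?thesis
      using Cons.IH by (metis append_Cons)
  qed
qed simp

text \<open>Every walk decomposes into an elementary path and a multiset of elementary circuits:
  repeatedly cut out a closed subwalk between two occurrences of a node.\<close>
lemma walk_decomposition:
  "walk N xs \<Longrightarrow> \<exists>p M. p \<in> elem_paths N \<and> (\<forall>\<delta>\<in>#M. elem_circuit N \<delta>) \<and>
     mset (path_arcs xs) = mset (path_arcs p) + (\<Sum>\<delta>\<in>#M. mset (circ_arcs \<delta>)) \<and>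
     set xs = set p \<union> (\<Union>\<delta>\<in>set_mset M. set \<delta>)"
proof (induction "length xs" arbitrary: xs rule: less_induct)
  case less
  show ?case
  proof (cases "distinct xs")
    case True
    then have "xs \<in> elem_paths N"
      using less.prems by (simp add: walk_def elem_paths_def)
    then show ?thesis
      by (intro exI[of _ xs] exI[of _ "{#}"]) simp
  next
    case False
    then obtain us v ws zs where xs: "xs = us @ v # ws @ v # zs" and dvw: "distinct (v # ws)"
      using split_nondistinct by blast
    define xs' where "xs' = us @ v # zs"
    have pa: "path_arcs xs = path_arcs (us @ [v]) @ circ_arcs (v # ws) @ path_arcs (v # zs)"
      unfolding xs by (rule path_arcs_split_circuit)
    have pa': "path_arcs xs' = path_arcs (us @ [v]) @ path_arcs (v # zs)"
      unfolding xs'_def by (rule path_arcs_append)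
    have w: "hd xs = In" "last xs = Out" "\<forall>e\<in>set (path_arcs xs). is_arc N e"
      using less.prems by (auto simp: walk_def)
    have "hd xs' = In"
      using w(1) unfolding xs xs'_def by (cases us) auto
    moreover have "last xs' = Out"
      using w(2) unfolding xs xs'_def by (cases zs) auto
    ultimately have "walk N xs'"
      using w(3) pa pa' unfolding walk_def xs'_def by auto
    moreover have "length xs' < length xs"
      unfolding xs xs'_def by simp
    ultimately obtain p M where pM: "p \<in> elem_paths N" "\<forall>\<delta>\<in>#M. elem_circuit N \<delta>"
      "mset (path_arcs xs') = mset (path_arcs p) + (\<Sum>\<delta>\<in>#M. mset (circ_arcs \<delta>))"
      "set xs' = set p \<union> (\<Union>\<delta>\<in>set_mset M. set \<delta>)"
      using less.hyps by blast
    have "elem_circuit N (v # ws)"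
      using dvw w(3) pa unfolding elem_circuit_def by auto
    moreover have "mset (path_arcs xs) = mset (path_arcs xs') + mset (circ_arcs (v # ws))"
      using pa pa' by simp
    moreover have "set xs = set xs' \<union> set (v # ws)"
      unfolding xs xs'_def by auto
    ultimately show ?thesis
      using pM by (intro exI[of _ p] exI[of _ "add_mset (v # ws) M"]) (auto simp: add_ac)
  qed
qed

lemma walk_tail_word:
  "zs \<noteq> [] \<Longrightarrow> last zs = Out \<Longrightarrow> \<forall>e\<in>set (path_arcs (Nd j # zs)). is_arc N e \<Longrightarrow>
     \<exists>ys. set ys \<subseteq> {1..N} \<and> zs = map Nd ys @ [Out]"
proof (induction zs arbitrary: j)
  case (Cons z zs)
  have arc: "is_arc N (Nd j, z)"
    using Cons.prems(3) by simp
  show ?case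
  proof (cases z)
    case Out
    have "zs = []"
    proof (rule ccontr)
      assume "zs \<noteq> []"
      then obtain y ys where "zs = y # ys"
        by (cases zs) auto
      then show False
        using Cons.prems(3) Out by (cases y) auto
    qed
    then show ?thesis
      using Out by (intro exI[of _ "[]"]) simp
  next
    case (Nd i)
    have zs: "zs \<noteq> []"
      using Cons.prems(2) Nd by auto
    then obtain ys where "set ys \<subseteq> {1..N}" "zs = map Nd ys @ [Out]"
      using Cons.IH[of i] Cons.prems Nd by (cases zs) auto
    then show ?thesis
      using Nd arc by (intro exI[of _ "i # ys"]) simp
  qed (use arc in simp)
qed simp

lemma walk_word:
  assumes "walk N xs"
  obtains ys where "ys \<noteq> []" "set ys \<subseteq> {1..N}" "xs = In # map Nd ys @ [Out]"
proof -
  obtain zs where xs: "xs = In # zs"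
    using assms unfolding walk_def by (cases xs) auto
  have "zs \<noteq> []"
    using assms xs unfolding walk_def by auto
  then obtain z zs' where zs: "zs = z # zs'"
    by (cases zs) auto
  have "is_arc N (In, z)"
    using assms xs zs unfolding walk_def by auto
  then obtain j where z: "z = Nd j" "j \<in> {1..N}"
    by (cases z) auto
  have "zs' \<noteq> []"
    using assms xs zs z unfolding walk_def by auto
  moreover have "last zs' = Out"
    using assms xs zs z \<open>zs' \<noteq> []\<close> unfolding walk_def by auto
  moreover have "\<forall>e\<in>set (path_arcs (Nd j # zs')). is_arc N e"
    using assms xs zs z unfolding walk_def by auto
  ultimately obtain ys where "set ys \<subseteq> {1..N}" "zs' = map Nd ys @ [Out]"
    using walk_tail_word by blast
  then show ?thesis
    using that[of "j # ys"] xs zs z by simp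
qed

lemma word_walk:
  assumes "ys \<noteq> []" "set ys \<subseteq> {1..N}"
  shows "walk N (In # map Nd ys @ [Out])"
proof -
  have "\<forall>e\<in>set (path_arcs (map Nd ys @ [Out])). is_arc N e"
    using assms
  proof (induction ys)
    case (Cons y ys)
    then show ?case by (cases ys) auto
  qed simp
  then show ?thesis
    using assms unfolding walk_def by (cases ys) auto
qed

text \<open>By commutativity the weight of a list of arcs only depends on its multiset of arcs.\<close>
definition mweight ::
  "(nat \<Rightarrow> nat \<Rightarrow> 'a::comm_semiring_1) \<Rightarrow> (nat \<Rightarrow> 'a) \<Rightarrow> (nat \<Rightarrow> 'a) \<Rightarrow> (node \<times> node) multiset \<Rightarrow> 'a fps"
  where "mweight A b c M = prod_mset (image_mset (arc_weight A b c) M)"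

lemma weight_mweight: "weight A b c es = mweight A b c (mset es)"
  unfolding weight_def mweight_def by (simp add: prod_mset_prod_list flip: mset_map)

lemma mweight_union: "mweight A b c (M + M') = mweight A b c M * mweight A b c M'"
  unfolding mweight_def by simp

lemma mweight_repeat: "mweight A b c (repeat_mset k M) = mweight A b c M ^ k"
  by (induction k) (simp_all add: mweight_def)

lemma mweight_sum_mset: "mweight A b c (\<Sum>x\<in>#M. f x) = (\<Prod>x\<in>#M. mweight A b c (f x))"
  by (induction M) (simp_all add: mweight_def)

lemma mweight_sum: "finite S \<Longrightarrow> mweight A b c (\<Sum>x\<in>S. f x) = (\<Prod>x\<in>S. mweight A b c (f x))"
  by (induction S rule: finite_induct) (simp_all add: mweight_def)

fun prodA :: "(nat \<Rightarrow> nat \<Rightarrow> 'a::comm_semiring_1) \<Rightarrow> nat list \<Rightarrow> 'a" where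
  "prodA A [] = 1"
| "prodA A [y] = 1"
| "prodA A (y # z # zs) = A z y * prodA A (z # zs)"

definition walk_value :: "(nat \<Rightarrow> nat \<Rightarrow> 'a::comm_semiring_1) \<Rightarrow> (nat \<Rightarrow> 'a) \<Rightarrow> (nat \<Rightarrow> 'a) \<Rightarrow> nat list \<Rightarrow> 'a"
  where "walk_value A b c ys = b (hd ys) * prodA A ys * c (last ys)"

lemma prodA_snoc: "ys \<noteq> [] \<Longrightarrow> prodA A (ys @ [i]) = prodA A ys * A i (last ys)"
proof (induction ys)
  case (Cons y ys)
  then show ?case by (cases ys) (auto simp: mult_ac)
qed simp

lemma weight_inner_walk:
  "ys \<noteq> [] \<Longrightarrow> weight A b c (path_arcs (map Nd ys)) = fps_const (prodA A ys) * fps_X ^ (length ys - 1)"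
proof (induction ys)
  case (Cons y ys)
  show ?case
  proof (cases ys)
    case (Cons z zs)
    have "weight A b c (path_arcs (map Nd (y # ys))) =
          fps_const (A z y) * fps_X * (fps_const (prodA A ys) * fps_X ^ (length ys - 1))"
      using Cons.IH Cons by (simp add: weight_def)
    also have "\<dots> = fps_const (prodA A (y # ys)) * fps_X ^ (length (y # ys) - 1)"
      using Cons by (simp add: mult_ac)
    finally show ?thesis .
  qed (simp add: weight_def)
qed simp

lemma weight_word_walk:
  assumes "ys \<noteq> []"
  shows "weight A b c (path_arcs (In # map Nd ys @ [Out])) =
         fps_const (walk_value A b c ys) * fps_X ^ (length ys - 1)"
proof -
  have "path_arcs (In # map Nd ys @ [Out]) =
        (In, Nd (hd ys)) # path_arcs (map Nd ys) @ [(Nd (last ys), Out)]"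
    using assms path_arcs_snoc[of "map Nd ys" Out] by (cases ys) (auto simp: last_map)
  then show ?thesis
    using weight_inner_walk[OF assms, of A b c]
    by (simp add: weight_def walk_value_def mult_ac flip: fps_const_mult)
qed

lemma fps_nth_const_X_power:
  "fps_nth (fps_const a * fps_X ^ k) m = (if m = k then a else 0)"
  unfolding fps_mult_left_const_nth fps_X_power_nth by simp

definition rep :: "node list set \<Rightarrow> node list" where
  "rep \<gamma> = (SOME xs. xs \<in> \<gamma>)"

lemma class_weight_rep: "class_weight A b c \<gamma> = weight A b c (circ_arcs (rep \<gamma>))"
  unfolding class_weight_def rep_def ..

lemma self_in_class: "\<delta> \<in> circ_class \<delta>"
  unfolding circ_class_def by (metis rangeI rotate0 id_apply)

lemma class_members:
  assumes "elem_circuit N \<delta>" "ys \<in> circ_class \<delta>"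
  shows "set ys = set \<delta>" "mset (circ_arcs ys) = mset (circ_arcs \<delta>)" "elem_circuit N ys"
proof -
  obtain k where ys: "ys = rotate k \<delta>"
    using assms(2) unfolding circ_class_def by auto
  show m: "mset (circ_arcs ys) = mset (circ_arcs \<delta>)"
    unfolding ys by (rule mset_circ_arcs_rotate)
  show "set ys = set \<delta>"
    unfolding ys by simp
  show "elem_circuit N ys"
    using assms(1) arg_cong[OF m, of set_mset] unfolding elem_circuit_def ys by auto
qed

lemma rep_props:
  assumes "\<gamma> \<in> elem_circuit_classes N"
  shows "rep \<gamma> \<in> \<gamma>" "elem_circuit N (rep \<gamma>)"
    and "ys \<in> \<gamma> \<Longrightarrow> set ys = set (rep \<gamma>)"
    and "ys \<in> \<gamma> \<Longrightarrow> mset (circ_arcs ys) = mset (circ_arcs (rep \<gamma>))"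
proof -
  obtain \<delta> where d: "elem_circuit N \<delta>" "\<gamma> = circ_class \<delta>"
    using assms unfolding elem_circuit_classes_def by auto
  show r: "rep \<gamma> \<in> \<gamma>"
    unfolding rep_def d(2) by (rule someI[of "\<lambda>xs. xs \<in> circ_class \<delta>", OF self_in_class])
  show "elem_circuit N (rep \<gamma>)"
    using class_members(3)[OF d(1)] r d(2) by simp
  show "ys \<in> \<gamma> \<Longrightarrow> set ys = set (rep \<gamma>)"
    using class_members(1)[OF d(1)] r d(2) by simp
  show "ys \<in> \<gamma> \<Longrightarrow> mset (circ_arcs ys) = mset (circ_arcs (rep \<gamma>))"
    using class_members(2)[OF d(1)] r d(2) by simp
qed

lemma class_weight_eq:
  assumes "elem_circuit N \<delta>"
  shows "class_weight A b c (circ_class \<delta>) = weight A b c (circ_arcs \<delta>)"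
proof -
  have "circ_class \<delta> \<in> elem_circuit_classes N"
    using assms unfolding elem_circuit_classes_def by simp
  then have "mset (circ_arcs \<delta>) = mset (circ_arcs (rep (circ_class \<delta>)))"
    using rep_props(4) self_in_class by blast
  then show ?thesis
    unfolding class_weight_rep weight_mweight by simp
qed

text \<open>Circuits only use inner nodes, so all their arcs carry a factor \<open>X\<close>; in particular
  class weights have zero constant coefficient and their Kleene plus makes sense.\<close>
lemma circuit_inner_arc:
  assumes "elem_circuit N r" "e \<in> set (circ_arcs r)"
  shows "\<exists>i j. e = (Nd i, Nd j)"
proof -
  have arcs: "\<forall>e\<in>set (circ_arcs r). is_arc N e"
    using assms(1) unfolding elem_circuit_def by simp
  have "set (map fst (circ_arcs r)) = set r" "set (map snd (circ_arcs r)) = set r"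
    by (simp_all add: circ_arcs_def)
  then have out_arc: "\<exists>e'\<in>set (circ_arcs r). fst e' = v"
    and in_arc: "\<exists>e'\<in>set (circ_arcs r). snd e' = v" if "v \<in> set r" for v
    using that by (metis (no_types, lifting) imageE list.set_map)+
  have "In \<notin> set r"
  proof
    assume "In \<in> set r"
    then obtain u where "is_arc N (u, In)"
      using in_arc arcs by (metis prod.collapse)
    then show False
      by (cases u) auto
  qed
  moreover have "Out \<notin> set r"
  proof
    assume "Out \<in> set r"
    then obtain v where "is_arc N (Out, v)"
      using out_arc arcs by (metis prod.collapse)
    then show False
      by (cases v) auto
  qed
  ultimately show ?thesis
    using circ_arcs_in_set[OF assms(2)] by (cases e; cases "fst e"; cases "snd e") auto
qed

lemma class_weight_nth_0:
  assumes "\<gamma> \<in> elem_circuit_classes N"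
  shows "fps_nth (class_weight A b c \<gamma>) 0 = 0"
proof -
  have r: "elem_circuit N (rep \<gamma>)"
    using rep_props(2)[OF assms] .
  then obtain e es where ce: "circ_arcs (rep \<gamma>) = e # es"
    using length_circ_arcs[of "rep \<gamma>"] unfolding elem_circuit_def by (cases "circ_arcs (rep \<gamma>)") auto
  then obtain i j where "e = (Nd i, Nd j)"
    using circuit_inner_arc[OF r, of e] by auto
  then show ?thesis
    unfolding class_weight_rep ce by (simp add: weight_def)
qed

definition nodes :: "nat \<Rightarrow> node set" where
  "nodes N = insert In (insert Out (Nd ` {1..N}))"

lemma arc_nodes: "is_arc N e \<Longrightarrow> fst e \<in> nodes N \<and> snd e \<in> nodes N"
  unfolding nodes_def by (cases e; cases "fst e"; cases "snd e") auto

lemma finite_distinct_node_lists: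
  "finite {xs. set xs \<subseteq> nodes N \<and> distinct xs}"
proof -
  have "{xs. set xs \<subseteq> nodes N \<and> distinct xs} \<subseteq> {xs. set xs \<subseteq> nodes N \<and> length xs \<le> card (nodes N)}"
    using card_mono[of "nodes N"] by (auto simp: nodes_def distinct_card[symmetric])
  moreover have "finite {xs. set xs \<subseteq> nodes N \<and> length xs \<le> card (nodes N)}"
    by (rule finite_lists_length_le) (simp add: nodes_def)
  ultimately show ?thesis
    by (rule finite_subset)
qed

lemma finite_elem_paths: "finite (elem_paths N)"
proof (rule finite_subset[OF _ finite_distinct_node_lists])
  have "set xs \<subseteq> nodes N" if "xs \<in> elem_paths N" for xs
  proof -
    have "set xs = insert (hd xs) (snd ` set (path_arcs xs))"
      using that unfolding elem_paths_def path_arcs_def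
      by (cases xs) (auto simp: map_snd_zip_take simp flip: set_map)
    moreover have "snd ` set (path_arcs xs) \<subseteq> nodes N"
      using that arc_nodes unfolding elem_paths_def by blast
    ultimately show ?thesis
      using that unfolding elem_paths_def nodes_def by auto
  qed
  then show "elem_paths N \<subseteq> {xs. set xs \<subseteq> nodes N \<and> distinct xs}"
    unfolding elem_paths_def by auto
qed

lemma finite_classes: "finite (elem_circuit_classes N)"
  unfolding elem_circuit_classes_def
proof (rule finite_imageI, rule finite_subset[OF _ finite_distinct_node_lists])
  have "set xs \<subseteq> nodes N" if "elem_circuit N xs" for xs
  proof -
    have "set xs = fst ` set (circ_arcs xs)"
      unfolding circ_arcs_def by (simp flip: set_map)
    then show ?thesis
      using that arc_nodes unfolding elem_circuit_def by auto
  qed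
  then show "{xs. elem_circuit N xs} \<subseteq> {xs. set xs \<subseteq> nodes N \<and> distinct xs}"
    unfolding elem_circuit_def by auto
qed

lemma finite_accessible_sets: "finite (accessible_sets N p)"
  using finite_classes by (auto simp: accessible_sets_def)

lemma finite_accessible_set: "C \<in> accessible_sets N p \<Longrightarrow> finite C"
  unfolding accessible_sets_def using finite_classes finite_subset by blast

section \<open>The coefficients of \<open>S\<^sub>N\<close> as sums over walks\<close>

text \<open>Words of length \<open>k + 1\<close> over the inner nodes; the word \<open>y\<^sub>1 \<dots> y\<^sub>k\<^sub>+\<^sub>1\<close> stands for
  the walk \<open>in \<rightarrow> y\<^sub>1 \<rightarrow> \<dots> \<rightarrow> y\<^sub>k\<^sub>+\<^sub>1 \<rightarrow> out\<close>, which has \<open>k\<close> inner arcs.\<close>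
definition words :: "nat \<Rightarrow> nat \<Rightarrow> nat list set" where
  "words N k = {ys. set ys \<subseteq> {1..N} \<and> length ys = Suc k}"

lemma finite_words: "finite (words N k)"
  unfolding words_def by (rule finite_lists_length_eq) simp

lemma words_nonempty: "ys \<in> words N k \<Longrightarrow> ys \<noteq> []"
  by (auto simp: words_def)

lemma words_hd_last:
  assumes "ys \<in> words N k"
  shows "hd ys \<in> {1..N}" "last ys \<in> {1..N}"
proof -
  have "ys \<noteq> []" "set ys \<subseteq> {1..N}"
    using assms by (auto simp: words_def)
  then show "hd ys \<in> {1..N}" "last ys \<in> {1..N}"
    by (meson hd_in_set last_in_set subsetD)+
qed

lemma words_snoc_image:
  assumes i: "i \<in> {1..N}"
  shows "(\<lambda>ys. ys @ [i]) ` {ys \<in> words N k. hd ys = j} =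
         {ys \<in> words N (Suc k). hd ys = j \<and> last ys = i}"
proof (intro equalityI subsetI)
  fix zs assume "zs \<in> (\<lambda>ys. ys @ [i]) ` {ys \<in> words N k. hd ys = j}"
  then obtain ys where ys: "ys \<in> words N k" "hd ys = j" and zs: "zs = ys @ [i]"
    by blast
  then show "zs \<in> {ys \<in> words N (Suc k). hd ys = j \<and> last ys = i}"
    using i words_nonempty[OF ys(1)] by (simp add: words_def)
next
  fix zs assume zs_in: "zs \<in> {ys \<in> words N (Suc k). hd ys = j \<and> last ys = i}"
  then have "zs = butlast zs @ [i]"
    by (metis (mono_tags, lifting) append_butlast_last_id mem_Collect_eq words_nonempty)
  then obtain ys where zs: "zs = ys @ [i]"
    by blast
  have ys: "ys \<in> words N k" "ys \<noteq> []"
    using zs_in unfolding zs by (auto simp: words_def)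
  moreover have "hd ys = j"
    using zs_in ys(2) unfolding zs by simp
  ultimately show "zs \<in> (\<lambda>ys. ys @ [i]) ` {ys \<in> words N k. hd ys = j}"
    unfolding zs by blast
qed

lemma matpow_words:
  assumes "i \<in> {1..N}"
  shows "matpow N A k i j = (\<Sum>ys\<in>{ys \<in> words N k. hd ys = j \<and> last ys = i}. prodA A ys)"
  using assms
proof (induction k arbitrary: i)
  case 0
  have "{ys \<in> words N 0. hd ys = j \<and> last ys = i} = (if i = j then {[i]} else {})"
    using 0 by (auto simp: words_def length_Suc_conv)
  then show ?case
    by simp
next
  case (Suc k)
  let ?V = "{ys \<in> words N k. hd ys = j}"
  have "A i l * matpow N A k l j = (\<Sum>ys\<in>{ys \<in> ?V. last ys = l}. prodA A (ys @ [i]))"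
    if l: "l \<in> {1..N}" for l
  proof -
    have "A i l * matpow N A k l j = (\<Sum>ys\<in>{ys \<in> ?V. last ys = l}. A i l * prodA A ys)"
      unfolding Suc.IH[OF l] sum_distrib_left by (intro sum.cong) auto
    also have "\<dots> = (\<Sum>ys\<in>{ys \<in> ?V. last ys = l}. prodA A (ys @ [i]))"
      by (intro sum.cong) (auto simp: prodA_snoc words_nonempty mult.commute)
    finally show ?thesis .
  qed
  then have "matpow N A (Suc k) i j =
        (\<Sum>l\<in>{1..N}. \<Sum>ys\<in>{ys \<in> ?V. last ys = l}. prodA A (ys @ [i]))"
    by simp
  also have "\<dots> = (\<Sum>ys\<in>?V. prodA A (ys @ [i]))"
    by (rule sum.group) (auto simp: finite_words dest: words_hd_last)
  also have "\<dots> = (\<Sum>ys\<in>(\<lambda>ys. ys @ [i]) ` ?V. prodA A ys)"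
    by (simp add: sum.reindex inj_on_def)
  finally show ?case
    unfolding words_snoc_image[OF Suc.prems] .
qed

lemma S_series_nth:
  "fps_nth (S_series N A b c) n = (\<Sum>ys\<in>words N n. walk_value A b c ys)"
proof -
  have "c i * matpow N A n i j * b j =
        (\<Sum>ys\<in>{ys \<in> words N n. (last ys, hd ys) = (i, j)}. walk_value A b c ys)"
    if "i \<in> {1..N}" for i j
  proof -
    have "c i * matpow N A n i j * b j =
        c i * (\<Sum>ys\<in>{ys \<in> words N n. hd ys = j \<and> last ys = i}. prodA A ys) * b j"
      by (simp only: matpow_words[OF that])
    also have "\<dots> = (\<Sum>ys\<in>{ys \<in> words N n. hd ys = j \<and> last ys = i}. c i * prodA A ys * b j)"
      by (simp only: sum_distrib_left sum_distrib_right)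
    also have "\<dots> = (\<Sum>ys\<in>{ys \<in> words N n. (last ys, hd ys) = (i, j)}. walk_value A b c ys)"
      by (intro sum.cong) (auto simp: walk_value_def mult_ac)
    finally show ?thesis .
  qed
  then have "fps_nth (S_series N A b c) n =
        (\<Sum>i\<in>{1..N}. \<Sum>j\<in>{1..N}. \<Sum>ys\<in>{ys \<in> words N n. (last ys, hd ys) = (i, j)}. walk_value A b c ys)"
    by (simp add: S_series_def)
  also have "\<dots> = (\<Sum>ij\<in>{1..N} \<times> {1..N}. \<Sum>ys\<in>{ys \<in> words N n. (last ys, hd ys) = ij}. walk_value A b c ys)"
    by (simp add: sum.cartesian_product split_def prod_eq_iff)
  also have "\<dots> = (\<Sum>ys\<in>words N n. walk_value A b c ys)"
    by (rule sum.group) (auto simp: finite_words dest: words_hd_last)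
  finally show ?thesis .
qed

section \<open>The coefficients of the right-hand side as sums over decorated paths\<close>

lemma fps_kstar_nth_trunc:
  assumes "fps_nth U 0 = 0" "j \<le> T"
  shows "fps_nth (fps_kstar U) j = fps_nth (\<Sum>k\<le>T. U ^ k) j"
proof -
  have "fps_nth (fps_kstar U) j = (\<Sum>k\<le>j. fps_nth (U ^ k) j)"
    unfolding fps_kstar_def by simp
  also have "\<dots> = (\<Sum>k\<le>T. fps_nth (U ^ k) j)"
    using assms startsby_zero_power_prefix[OF assms(1)] by (intro sum.mono_neutral_left) auto
  finally show ?thesis
    by (simp add: fps_sum_nth)
qed

lemma fps_nth_mult_trunc:
  assumes "\<And>m. m \<le> n \<Longrightarrow> fps_nth F m = fps_nth F' m" "\<And>m. m \<le> n \<Longrightarrow> fps_nth G m = fps_nth G' m"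
  shows "fps_nth (F * G) n = fps_nth (F' * G') n"
  unfolding fps_mult_nth using assms by (intro sum.cong) auto

lemma fps_kplus_nth_trunc:
  assumes U0: "fps_nth U 0 = 0" and m: "m \<le> Suc T"
  shows "fps_nth (fps_kplus U) m = fps_nth (\<Sum>k\<in>{1..Suc T}. U ^ k) m"
proof -
  have "fps_nth U i * fps_nth (fps_kstar U) (m - i) = fps_nth U i * fps_nth (\<Sum>k\<le>T. U ^ k) (m - i)"
    if "i \<le> m" for i
    using that m U0 fps_kstar_nth_trunc[OF U0, of "m - i" T] by (cases i) simp_all
  then have "fps_nth (fps_kplus U) m = fps_nth (U * (\<Sum>k\<le>T. U ^ k)) m"
    unfolding fps_kplus_def fps_mult_nth by (intro sum.cong) auto
  also have "U * (\<Sum>k\<le>T. U ^ k) = (\<Sum>k=0..T. U ^ Suc k)"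
    by (simp add: sum_distrib_left atLeast0AtMost)
  also have "\<dots> = (\<Sum>k\<in>{1..Suc T}. U ^ k)"
    by (simp only: One_nat_def sum.shift_bounds_cl_Suc_ivl)
  finally show ?thesis .
qed

lemma fps_nth_prod_trunc:
  assumes "finite C" "\<And>\<gamma> m. \<gamma> \<in> C \<Longrightarrow> m \<le> n \<Longrightarrow> fps_nth (F \<gamma>) m = fps_nth (G \<gamma>) m" "m \<le> n"
  shows "fps_nth (\<Prod>\<gamma>\<in>C. F \<gamma>) m = fps_nth (\<Prod>\<gamma>\<in>C. G \<gamma>) m"
  using assms
proof (induction C arbitrary: m rule: finite_induct)
  case (insert x C)
  then have "fps_nth (F x * (\<Prod>\<gamma>\<in>C. F \<gamma>)) m = fps_nth (G x * (\<Prod>\<gamma>\<in>C. G \<gamma>)) m"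
    by (intro fps_nth_mult_trunc) auto
  then show ?case
    using insert.hyps by simp
qed simp

lemma fps_nth_mult_prod_kplus:
  fixes U :: "'b \<Rightarrow> 'a::comm_semiring_1 fps"
  assumes "finite C" "\<And>\<gamma>. \<gamma> \<in> C \<Longrightarrow> fps_nth (U \<gamma>) 0 = 0"
  shows "fps_nth (W * (\<Prod>\<gamma>\<in>C. fps_kplus (U \<gamma>))) n =
         (\<Sum>g\<in>C \<rightarrow>\<^sub>E {1..Suc (Suc n)}. fps_nth (W * (\<Prod>\<gamma>\<in>C. U \<gamma> ^ g \<gamma>)) n)"
proof -
  have "fps_nth (W * (\<Prod>\<gamma>\<in>C. fps_kplus (U \<gamma>))) n =
        fps_nth (W * (\<Prod>\<gamma>\<in>C. \<Sum>k\<in>{1..Suc (Suc n)}. U \<gamma> ^ k)) n"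
    using assms fps_kplus_nth_trunc[of "U _" _ "Suc n"]
    by (intro fps_nth_mult_trunc fps_nth_prod_trunc[where n = n]) auto
  also have "(\<Prod>\<gamma>\<in>C. \<Sum>k\<in>{1..Suc (Suc n)}. U \<gamma> ^ k) =
             (\<Sum>g\<in>C \<rightarrow>\<^sub>E {1..Suc (Suc n)}. \<Prod>\<gamma>\<in>C. U \<gamma> ^ g \<gamma>)"
    using assms(1) by (rule prod_sum_PiE) simp
  finally show ?thesis
    by (simp add: sum_distrib_left fps_sum_nth)
qed

text \<open>A decorated path is an elementary path \<open>p\<close> together with an accessible set \<open>C\<close> of
  circuit classes and a multiplicity \<open>g \<gamma> \<ge> 1\<close> for each class; multiplicities above \<open>n + 2\<close>
  cannot contribute to coefficient \<open>n\<close>.\<close>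
definition decorations :: "nat \<Rightarrow> nat \<Rightarrow> (node list \<times> node list set set \<times> (node list set \<Rightarrow> nat)) set"
  where "decorations N n =
    (SIGMA p:elem_paths N. SIGMA C:accessible_sets N p. C \<rightarrow>\<^sub>E {1..Suc (Suc n)})"

fun decorated_weight :: "(nat \<Rightarrow> nat \<Rightarrow> 'a::comm_semiring_1) \<Rightarrow> (nat \<Rightarrow> 'a) \<Rightarrow> (nat \<Rightarrow> 'a) \<Rightarrow>
    node list \<times> node list set set \<times> (node list set \<Rightarrow> nat) \<Rightarrow> 'a fps" where
  "decorated_weight A b c (p, C, g) = weight A b c (path_arcs p) * (\<Prod>\<gamma>\<in>C. class_weight A b c \<gamma> ^ g \<gamma>)"

lemma finite_decorations: "finite (decorations N n)"
  unfolding decorations_def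
  by (intro finite_SigmaI finite_elem_paths finite_accessible_sets finite_PiE
      finite_accessible_set) auto

lemma rhs_nth:
  "fps_nth (\<Sum>p\<in>elem_paths N. weight A b c (path_arcs p) *
       (\<Sum>C\<in>accessible_sets N p. \<Prod>\<gamma>\<in>C. fps_kplus (class_weight A b c \<gamma>))) n =
   (\<Sum>d\<in>decorations N n. fps_nth (decorated_weight A b c d) n)"
proof -
  have "fps_nth (weight A b c (path_arcs p) * (\<Prod>\<gamma>\<in>C. fps_kplus (class_weight A b c \<gamma>))) n =
        (\<Sum>g\<in>C \<rightarrow>\<^sub>E {1..Suc (Suc n)}. fps_nth (decorated_weight A b c (p, C, g)) n)"
    if "C \<in> accessible_sets N p" for p C
  proof -
    have "finite C" "\<And>\<gamma>. \<gamma> \<in> C \<Longrightarrow> fps_nth (class_weight A b c \<gamma>) 0 = 0"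
      using that finite_accessible_set class_weight_nth_0 unfolding accessible_sets_def by blast+
    then show ?thesis
      by (simp add: fps_nth_mult_prod_kplus)
  qed
  then have "fps_nth (\<Sum>p\<in>elem_paths N. weight A b c (path_arcs p) *
       (\<Sum>C\<in>accessible_sets N p. \<Prod>\<gamma>\<in>C. fps_kplus (class_weight A b c \<gamma>))) n =
   (\<Sum>p\<in>elem_paths N. \<Sum>C\<in>accessible_sets N p. \<Sum>g\<in>C \<rightarrow>\<^sub>E {1..Suc (Suc n)}.
       fps_nth (decorated_weight A b c (p, C, g)) n)"
    by (simp add: fps_sum_nth sum_distrib_left)
  also have "\<dots> = (\<Sum>(p, C, g)\<in>decorations N n. fps_nth (decorated_weight A b c (p, C, g)) n)"
    unfolding decorations_def
    by (simp add: sum.Sigma finite_elem_paths finite_accessible_sets finite_accessible_set finite_PiE)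
  finally show ?thesis
    by (simp only: split_def prod.collapse)
qed

section \<open>Gluing circuits into walks\<close>

lemma walk_insert_circuit:
  assumes w: "walk N xs" and d: "elem_circuit N \<delta>" and v: "v \<in> set xs" "v \<in> set \<delta>"
  obtains xs' where "walk N xs'" "mset (path_arcs xs') = mset (path_arcs xs) + mset (circ_arcs \<delta>)"
    "set xs' = set xs \<union> set \<delta>"
proof -
  obtain as bs where \<delta>: "\<delta> = as @ v # bs"
    using split_list[OF v(2)] by blast
  define \<delta>' where "\<delta>' = v # bs @ as"
  have m: "mset (circ_arcs \<delta>') = mset (circ_arcs \<delta>)"
    using mset_circ_arcs_rotate[of "length as" \<delta>] unfolding \<delta> \<delta>'_def by (simp add: rotate_append)
  obtain us zs where xs: "xs = us @ v # zs"
    using split_list[OF v(1)] by blast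
  define xs' where "xs' = us @ v # (bs @ as) @ v # zs"
  have pa: "path_arcs xs' = path_arcs (us @ [v]) @ circ_arcs \<delta>' @ path_arcs (v # zs)"
    unfolding xs'_def \<delta>'_def by (rule path_arcs_split_circuit)
  have pa0: "path_arcs xs = path_arcs (us @ [v]) @ path_arcs (v # zs)"
    unfolding xs by (rule path_arcs_append)
  have wx: "hd xs = In" "last xs = Out" "\<forall>e\<in>set (path_arcs xs). is_arc N e"
    using w unfolding walk_def by auto
  have "hd xs' = In"
    using wx(1) unfolding xs xs'_def by (cases us) auto
  moreover have "last xs' = Out"
    using wx(2) unfolding xs xs'_def by (cases zs) auto
  moreover have "\<forall>e\<in>set (circ_arcs \<delta>'). is_arc N e"
    using d arg_cong[OF m, of set_mset] unfolding elem_circuit_def by auto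
  then have "\<forall>e\<in>set (path_arcs xs'). is_arc N e"
    using wx(3) pa pa0 by auto
  ultimately have "walk N xs'"
    unfolding walk_def xs'_def by simp
  moreover have "mset (path_arcs xs') = mset (path_arcs xs) + mset (circ_arcs \<delta>)"
    using pa pa0 m by simp
  moreover have "set xs' = set xs \<union> set \<delta>"
    unfolding xs xs'_def \<delta> by auto
  ultimately show ?thesis
    using that by blast
qed

lemma walk_insert_circuit_power:
  assumes w: "walk N xs" and d: "elem_circuit N \<delta>" and v: "v \<in> set xs" "v \<in> set \<delta>"
    and k: "k \<ge> 1"
  obtains xs' where "walk N xs'"
    "mset (path_arcs xs') = mset (path_arcs xs) + repeat_mset k (mset (circ_arcs \<delta>))"
    "set xs' = set xs \<union> set \<delta>"
proof -
  have "\<exists>xs'. walk N xs' \<and>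
          mset (path_arcs xs') = mset (path_arcs xs) + repeat_mset (Suc k) (mset (circ_arcs \<delta>)) \<and>
          set xs' = set xs \<union> set \<delta>" for k
  proof (induction k)
    case 0
    then show ?case
      using walk_insert_circuit[OF w d v] by (metis repeat_mset_Suc repeat_mset_0 add_0_right)
  next
    case (Suc k)
    then obtain xs1 where xs1: "walk N xs1"
      "mset (path_arcs xs1) = mset (path_arcs xs) + repeat_mset (Suc k) (mset (circ_arcs \<delta>))"
      "set xs1 = set xs \<union> set \<delta>"
      by blast
    obtain xs2 where "walk N xs2" "mset (path_arcs xs2) = mset (path_arcs xs1) + mset (circ_arcs \<delta>)"
      "set xs2 = set xs1 \<union> set \<delta>"
      using walk_insert_circuit[OF xs1(1) d _ v(2)] xs1(3) v(1) by blast
    then show ?case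
      using xs1 by (intro exI[of _ xs2]) (auto simp: add_ac)
  qed
  then show ?thesis
    using that k by (metis Suc_pred' less_eq_Suc_le One_nat_def)
qed

lemma accessible_next_class:
  assumes acc: "accessible p C" and C: "C \<subseteq> elem_circuit_classes N" and p: "p \<noteq> []"
    and D: "D \<subseteq> C" "D \<noteq> C"
  shows "\<exists>\<gamma>\<in>C - D. set (rep \<gamma>) \<inter> (set p \<union> (\<Union>\<gamma>\<in>D. set (rep \<gamma>))) \<noteq> {}"
proof (rule ccontr)
  assume none: "\<not> ?thesis"
  define X where "X = set p \<union> (\<Union>\<gamma>\<in>D. set (rep \<gamma>))"
  define E where "E = set (path_arcs p) \<union> (\<Union>\<gamma>\<in>C. \<Union>ys\<in>\<gamma>. set (circ_arcs ys))"
  obtain \<gamma>0 where \<gamma>0: "\<gamma>0 \<in> C - D"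
    using D by blast
  have rep0: "rep \<gamma>0 \<in> \<gamma>0" "elem_circuit N (rep \<gamma>0)"
    using rep_props(1,2)[of \<gamma>0 N] \<gamma>0 C by auto
  then obtain u where u: "u \<in> set (rep \<gamma>0)"
    unfolding elem_circuit_def by (cases "rep \<gamma>0") auto
  then have "u \<notin> X"
    using none \<gamma>0 unfolding X_def by blast
  moreover have "(hd p, u) \<in> (E \<union> E\<inverse>)\<^sup>*"
  proof -
    have "hd p \<in> set p"
      using p by simp
    moreover have "u \<in> (\<Union>\<gamma>\<in>C. \<Union>ys\<in>\<gamma>. set ys)"
      using \<gamma>0 rep0(1) u by blast
    ultimately show ?thesis
      using acc unfolding accessible_def Let_def E_def by blast
  qed
  ultimately obtain x y where xy: "(x, y) \<in> E \<union> E\<inverse>" "x \<in> X" "y \<notin> X"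
    using rtrancl_leaves_set[of "hd p" u "E \<union> E\<inverse>" X] p unfolding X_def by auto
  then obtain e where e: "e \<in> E" "{x, y} = {fst e, snd e}"
    by (metis Un_iff converse_iff fst_conv insert_commute snd_conv)
  have ends: "x \<in> {fst e, snd e}" "y \<in> {fst e, snd e}"
    using e(2) by blast+
  show False
  proof (cases "e \<in> set (path_arcs p)")
    case True
    then have "y \<in> set p"
      using path_arcs_in_set[OF True] ends(2) by blast
    then show False
      using xy(3) unfolding X_def by blast
  next
    case False
    then obtain \<gamma> ys where \<gamma>: "\<gamma> \<in> C" "ys \<in> \<gamma>" "e \<in> set (circ_arcs ys)"
      using e(1) unfolding E_def by blast
    have "set ys = set (rep \<gamma>)"
      using rep_props(3)[of \<gamma> N ys] C \<gamma>(1,2) by blast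
    then have "x \<in> set (rep \<gamma>)" "y \<in> set (rep \<gamma>)"
      using circ_arcs_in_set[OF \<gamma>(3)] ends by blast+
    then show False
      using none xy(2,3) \<gamma>(1) unfolding X_def by blast
  qed
qed

text \<open>The classes are inserted one at a time, always choosing one that touches the walk
  built so far.\<close>
lemma walk_from_decoration:
  assumes p: "p \<in> elem_paths N" and C: "C \<in> accessible_sets N p" and g: "\<forall>\<gamma>\<in>C. g \<gamma> \<ge> 1"
  obtains xs where "walk N xs"
    "mset (path_arcs xs) = mset (path_arcs p) + (\<Sum>\<gamma>\<in>C. repeat_mset (g \<gamma>) (mset (circ_arcs (rep \<gamma>))))"
proof -
  have C': "C \<subseteq> elem_circuit_classes N" "accessible p C" "finite C"
    using C finite_accessible_set unfolding accessible_sets_def by auto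
  have p': "p \<noteq> []" "walk N p"
    using p unfolding elem_paths_def walk_def by auto
  have grow: "\<exists>D xs. D \<subseteq> C \<and> card D = k \<and> walk N xs \<and>
     mset (path_arcs xs) = mset (path_arcs p) + (\<Sum>\<gamma>\<in>D. repeat_mset (g \<gamma>) (mset (circ_arcs (rep \<gamma>)))) \<and>
     set xs = set p \<union> (\<Union>\<gamma>\<in>D. set (rep \<gamma>))" if "k \<le> card C" for k
    using that
  proof (induction k)
    case 0
    show ?case
      using p'(2) by (intro exI[of _ "{}"] exI[of _ p]) simp
  next
    case (Suc k)
    obtain D xs where D: "D \<subseteq> C" "card D = k" "walk N xs"
      "mset (path_arcs xs) = mset (path_arcs p) + (\<Sum>\<gamma>\<in>D. repeat_mset (g \<gamma>) (mset (circ_arcs (rep \<gamma>))))"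
      "set xs = set p \<union> (\<Union>\<gamma>\<in>D. set (rep \<gamma>))"
      using Suc.IH[OF Suc_leD[OF Suc.prems]] by blast
    have "D \<noteq> C"
      using D(2) Suc.prems by auto
    then obtain \<gamma> v where \<gamma>: "\<gamma> \<in> C" "\<gamma> \<notin> D" "v \<in> set (rep \<gamma>)" "v \<in> set xs"
      using accessible_next_class[OF C'(2,1) p'(1) D(1)] D(5) by blast
    have circ: "elem_circuit N (rep \<gamma>)"
      using rep_props(2) \<gamma>(1) C'(1) by blast
    have "g \<gamma> \<ge> 1"
      using g \<gamma>(1) by blast
    obtain xs' where xs': "walk N xs'"
      "mset (path_arcs xs') = mset (path_arcs xs) + repeat_mset (g \<gamma>) (mset (circ_arcs (rep \<gamma>)))"
      "set xs' = set xs \<union> set (rep \<gamma>)"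
      using walk_insert_circuit_power[OF D(3) circ \<gamma>(4,3) \<open>g \<gamma> \<ge> 1\<close>] by blast
    have "finite D"
      using D(1) C'(3) finite_subset by blast
    show ?case
    proof (intro exI[of _ "insert \<gamma> D"] exI[of _ xs'] conjI)
      show "insert \<gamma> D \<subseteq> C" "card (insert \<gamma> D) = Suc k"
        using D(1,2) \<gamma>(1,2) \<open>finite D\<close> by simp_all
      show "mset (path_arcs xs') = mset (path_arcs p) +
          (\<Sum>\<gamma>\<in>insert \<gamma> D. repeat_mset (g \<gamma>) (mset (circ_arcs (rep \<gamma>))))"
        using xs'(2) D(4) \<gamma>(2) \<open>finite D\<close> by (simp add: add_ac)
      show "set xs' = set p \<union> (\<Union>\<gamma>\<in>insert \<gamma> D. set (rep \<gamma>))"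
        using xs'(3) D(5) by auto
    qed (rule xs'(1))
  qed
  obtain D xs where D: "D \<subseteq> C" "card D = card C" "walk N xs"
    "mset (path_arcs xs) = mset (path_arcs p) + (\<Sum>\<gamma>\<in>D. repeat_mset (g \<gamma>) (mset (circ_arcs (rep \<gamma>))))"
    using grow[OF order_refl] by blast
  moreover have "D = C"
    using card_subset_eq[OF C'(3) D(1,2)] .
  ultimately show ?thesis
    using that by blast
qed

section \<open>From walks to decorated paths and back\<close>

text \<open>A multiset of nonempty multisets has at most as many members as their sum has elements;
  this bounds the multiplicities of the circuits of a walk by its number of arcs.\<close>
lemma size_le_size_sum_mset:
  "(\<And>x. x \<in># M \<Longrightarrow> f x \<noteq> {#}) \<Longrightarrow> size M \<le> size (\<Sum>x\<in>#M. f x)"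
proof (induction M)
  case (add x M)
  then have "1 \<le> size (f x)"
    by (simp add: Suc_le_eq nonempty_has_size)
  with add show ?case
    by simp
qed simp

lemma decomposition_weight:
  assumes M: "\<forall>\<delta>\<in>#M. elem_circuit N \<delta>"
    and arcs: "mset (path_arcs xs) = mset (path_arcs p) + (\<Sum>\<delta>\<in>#M. mset (circ_arcs \<delta>))"
  shows "weight A b c (path_arcs xs) = weight A b c (path_arcs p) *
    (\<Prod>\<gamma>\<in>set_mset (image_mset circ_class M). class_weight A b c \<gamma> ^ count (image_mset circ_class M) \<gamma>)"
proof -
  have "weight A b c (path_arcs xs) = weight A b c (path_arcs p) * (\<Prod>\<delta>\<in>#M. weight A b c (circ_arcs \<delta>))"
    unfolding weight_mweight[of A b c "path_arcs xs"] arcs mweight_union mweight_sum_mset weight_mweight ..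
  also have "(\<Prod>\<delta>\<in>#M. weight A b c (circ_arcs \<delta>)) = (\<Prod>\<delta>\<in>#M. class_weight A b c (circ_class \<delta>))"
    using M class_weight_eq by (metis (mono_tags, lifting) image_mset_cong)
  also have "\<dots> = prod_mset (image_mset (class_weight A b c) (image_mset circ_class M))"
    by (simp add: multiset.map_comp comp_def)
  finally show ?thesis
    by (simp only: image_prod_mset_multiplicity)
qed

text \<open>The circuits of a walk decomposition form a set accessible from the path, because the
  walk itself connects all their nodes.\<close>
lemma decomposition_accessible:
  assumes M: "\<forall>\<delta>\<in>#M. elem_circuit N \<delta>"
    and arcs: "mset (path_arcs xs) = mset (path_arcs p) + (\<Sum>\<delta>\<in>#M. mset (circ_arcs \<delta>))"
    and nodes: "set xs = set p \<union> (\<Union>\<delta>\<in>set_mset M. set \<delta>)"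
  shows "accessible p (circ_class ` set_mset M)"
proof -
  let ?C = "circ_class ` set_mset M"
  have class_nodes: "(\<Union>ys\<in>circ_class \<delta>. set ys) = set \<delta>" if "\<delta> \<in># M" for \<delta>
    using class_members(1)[of N \<delta>] M that self_in_class[of \<delta>] by blast
  have "set (circ_arcs ys) = set (circ_arcs \<delta>)" if "\<delta> \<in># M" "ys \<in> circ_class \<delta>" for ys \<delta>
    using class_members(2)[of N \<delta> ys] M that by (metis set_mset_mset)
  then have class_arcs: "(\<Union>ys\<in>circ_class \<delta>. set (circ_arcs ys)) = set (circ_arcs \<delta>)"
    if "\<delta> \<in># M" for \<delta>
    using that self_in_class[of \<delta>] by blast
  have "set p \<union> (\<Union>\<gamma>\<in>?C. \<Union>ys\<in>\<gamma>. set ys) = set xs"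
    using nodes class_nodes by simp
  moreover have "set (path_arcs p) \<union> (\<Union>\<gamma>\<in>?C. \<Union>ys\<in>\<gamma>. set (circ_arcs ys)) = set (path_arcs xs)"
    using arg_cong[OF arcs, of set_mset] class_arcs by simp
  ultimately show ?thesis
    unfolding accessible_def Let_def using walk_connected[of _ xs] by simp
qed

lemma word_decoration:
  assumes ys: "ys \<in> words N n"
  shows "\<exists>d\<in>decorations N n. walk_value A b c ys = fps_nth (decorated_weight A b c d) n"
proof -
  define xs where "xs = In # map Nd ys @ [Out]"
  have "walk N xs"
    unfolding xs_def using ys by (intro word_walk) (auto simp: words_def)
  then obtain p M where p: "p \<in> elem_paths N" and M: "\<forall>\<delta>\<in>#M. elem_circuit N \<delta>"
    and arcs: "mset (path_arcs xs) = mset (path_arcs p) + (\<Sum>\<delta>\<in>#M. mset (circ_arcs \<delta>))"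
    and nodes: "set xs = set p \<union> (\<Union>\<delta>\<in>set_mset M. set \<delta>)"
    using walk_decomposition by blast
  define M' where "M' = image_mset circ_class M"
  define C where "C = set_mset M'"
  define g where "g = restrict (count M') C"
  have "C \<subseteq> elem_circuit_classes N"
    using M unfolding C_def M'_def elem_circuit_classes_def by auto
  moreover have "accessible p C"
    using decomposition_accessible[OF M arcs nodes] unfolding C_def M'_def by simp
  ultimately have C_acc: "C \<in> accessible_sets N p"
    unfolding accessible_sets_def by simp
  have "mset (circ_arcs \<delta>) \<noteq> {#}" if "\<delta> \<in># M" for \<delta>
    using M that length_circ_arcs[of \<delta>] unfolding elem_circuit_def by auto
  then have "size M \<le> size (\<Sum>\<delta>\<in>#M. mset (circ_arcs \<delta>))"
    by (rule size_le_size_sum_mset)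
  also have "\<dots> \<le> length (path_arcs xs)"
    using arg_cong[OF arcs, of size] by simp
  also have "\<dots> = Suc (Suc n)"
    using ys unfolding xs_def words_def by (simp add: length_path_arcs)
  finally have "count M' \<gamma> \<le> Suc (Suc n)" for \<gamma>
    unfolding M'_def by (metis count_le_size le_trans size_image_mset)
  then have "g \<in> C \<rightarrow>\<^sub>E {1..Suc (Suc n)}"
    unfolding g_def C_def by (auto simp: Suc_le_eq)
  with p C_acc have "(p, C, g) \<in> decorations N n"
    unfolding decorations_def by simp
  moreover have "weight A b c (path_arcs xs) = decorated_weight A b c (p, C, g)"
    unfolding decomposition_weight[OF M arcs] decorated_weight.simps C_def M'_def g_def
    by (intro arg_cong2[where f = "(*)"] refl prod.cong) simp_all
  moreover have "weight A b c (path_arcs xs) = fps_const (walk_value A b c ys) * fps_X ^ n"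
    using ys weight_word_walk[OF words_nonempty[OF ys], of A b c] unfolding xs_def words_def by simp
  ultimately show ?thesis
    by (metis fps_nth_const_X_power)
qed

text \<open>Conversely, the weight of every decorated path is that of a walk, so its coefficient
  \<open>n\<close> either vanishes or is the value of a walk with \<open>n\<close> inner arcs.\<close>
lemma decoration_word:
  assumes d: "d \<in> decorations N n"
  shows "fps_nth (decorated_weight A b c d) n = 0 \<or>
         (\<exists>ys\<in>words N n. fps_nth (decorated_weight A b c d) n = walk_value A b c ys)"
proof -
  obtain p C g where d_eq: "d = (p, C, g)" and p: "p \<in> elem_paths N"
    and C: "C \<in> accessible_sets N p" and g: "g \<in> C \<rightarrow>\<^sub>E {1..Suc (Suc n)}"
    using d unfolding decorations_def by blast
  have "\<forall>\<gamma>\<in>C. g \<gamma> \<ge> 1"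
    using PiE_mem[OF g] by simp
  then obtain xs where xs: "walk N xs"
    "mset (path_arcs xs) = mset (path_arcs p) + (\<Sum>\<gamma>\<in>C. repeat_mset (g \<gamma>) (mset (circ_arcs (rep \<gamma>))))"
    using walk_from_decoration[OF p C] by blast
  obtain ys where ys: "ys \<noteq> []" "set ys \<subseteq> {1..N}" "xs = In # map Nd ys @ [Out]"
    using walk_word[OF xs(1)] by blast
  have "decorated_weight A b c d = weight A b c (path_arcs xs)"
    unfolding d_eq decorated_weight.simps weight_mweight[of A b c "path_arcs xs"] xs(2) mweight_union
      mweight_sum[OF finite_accessible_set[OF C]] mweight_repeat class_weight_rep weight_mweight ..
  also have "\<dots> = fps_const (walk_value A b c ys) * fps_X ^ (length ys - 1)"
    unfolding ys(3) by (rule weight_word_walk[OF ys(1)])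
  finally have "fps_nth (decorated_weight A b c d) n =
                (if n = length ys - 1 then walk_value A b c ys else 0)"
    by (simp add: fps_nth_const_X_power)
  moreover have "ys \<in> words N n" if "n = length ys - 1"
    using ys(1,2) that unfolding words_def by simp
  ultimately show ?thesis
    by (cases "n = length ys - 1") auto
qed

theorem proposition1:
  fixes N :: nat
    and A :: "nat \<Rightarrow> nat \<Rightarrow> 'a::idem_comm_semiring_1"
    and b c :: "nat \<Rightarrow> 'a"
  assumes "N \<ge> 1"
  shows "S_series N A b c =
    (\<Sum>p\<in>elem_paths N. weight A b c (path_arcs p) *
       (\<Sum>C\<in>accessible_sets N p. \<Prod>\<gamma>\<in>C. fps_kplus (class_weight A b c \<gamma>)))"
proof (rule fps_ext)
  fix n
  have "fps_nth (S_series N A b c) n = (\<Sum>ys\<in>words N n. walk_value A b c ys)"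
    by (rule S_series_nth)
  also have "\<dots> = (\<Sum>d\<in>decorations N n. fps_nth (decorated_weight A b c d) n)"
    by (rule idem_sum_eqI[OF finite_words finite_decorations word_decoration decoration_word])
  also have "\<dots> = fps_nth (\<Sum>p\<in>elem_paths N. weight A b c (path_arcs p) *
       (\<Sum>C\<in>accessible_sets N p. \<Prod>\<gamma>\<in>C. fps_kplus (class_weight A b c \<gamma>))) n"
    by (rule rhs_nth[symmetric])
  finally show "fps_nth (S_series N A b c) n = fps_nth (\<Sum>p\<in>elem_paths N. weight A b c (path_arcs p) *
       (\<Sum>C\<in>accessible_sets N p. \<Prod>\<gamma>\<in>C. fps_kplus (class_weight A b c \<gamma>))) n" .
qed

end
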